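(* Let $\mathcal{H}=\{P_3,K_3\}$ and let $k\geq 3$ be an integer. Then \[\mathcal{E}_\mathcal{H}(k)=\begin{cases}\binom{k+1}{2}-\frac{k+2}{2} & k\text{ even},\\ \binom{k+1}{2}-\frac{k+1}{2} & k\text{ odd}.\end{cases}\] Moreover, the only simple graph $G$ with $\operatorname{ex}(G,\mathcal{H})<k$ attaining this number of edges is $G_k$, where for $k$ odd $G_k=K_{k+1}\setminus\frac{k+1}{2}K_2$ (the complete graph on $k+1$ vertices minus a perfect matching), and for $k$ even $G_k=K_{k+1}\setminus(\frac{k-2}{2}K_2\cup P_2)$ (the complete graph on $k+1$ vertices minus a vertex-disjoint union of $\frac{k-2}{2}$ edges and one path with 2 edges, covering all $k+1$ vertices).
   Context: $P_t$ denotes the path with $t$ edges; $sK_2$ denotes a matching of $s$ edges. Graphs are simple, 2-uniform, without isolated vertices. $\operatorname{ex}(G,\mathcal{H})$ is the maximum number of edges in a subgraph of $G$ containing no member of $\mathcal{H}$, and $\mathcal{E}_\mathcal{H}(k):=\sup\{e(G): G\text{ simple}, \operatorname{ex}(G,\mathcal{H})<k\}$. *)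

theory Defs
  imports Main "HOL-Library.Extended_Nat"
begin

text \<open>A simple graph without isolated vertices is represented by its (finite) edge set;
  each edge is a 2-element set of vertices. Vertices are natural numbers
  (every finite graph is isomorphic to one on nat).\<close>

definition simple_graph :: "nat set set \<Rightarrow> bool" where
  "simple_graph E \<longleftrightarrow> finite E \<and> (\<forall>e\<in>E. card e = 2)"

definition has_P3 :: "nat set set \<Rightarrow> bool" where
  "has_P3 F \<longleftrightarrow> (\<exists>a b c d. distinct [a,b,c,d] \<and> {a,b} \<in> F \<and> {b,c} \<in> F \<and> {c,d} \<in> F)"

definition has_K3 :: "nat set set \<Rightarrow> bool" where
  "has_K3 F \<longleftrightarrow> (\<exists>a b c. distinct [a,b,c] \<and> {a,b} \<in> F \<and> {b,c} \<in> F \<and> {a,c} \<in> F)"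

definition H_free :: "nat set set \<Rightarrow> bool" where
  "H_free F \<longleftrightarrow> \<not> has_P3 F \<and> \<not> has_K3 F"

definition ex_H :: "nat set set \<Rightarrow> nat" where
  "ex_H G = Max {card F | F. F \<subseteq> G \<and> H_free F}"

definition E_H :: "nat \<Rightarrow> enat" where
  "E_H k = Sup {enat (card G) | G. simple_graph G \<and> ex_H G < k}"

definition graph_iso :: "nat set set \<Rightarrow> nat set set \<Rightarrow> bool" where
  "graph_iso G H \<longleftrightarrow> (\<exists>f. bij_betw f (\<Union>G) (\<Union>H) \<and> (\<lambda>e. f ` e) ` G = H)"

definition removed_edges :: "nat \<Rightarrow> nat set set" where
  "removed_edges k =
     (if odd k then {{2*i, 2*i+1} | i. i < (k+1) div 2}
      else {{2*i, 2*i+1} | i. i < (k-2) div 2} \<union> {{k-2, k-1}, {k-1, k}})"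

definition G_k :: "nat \<Rightarrow> nat set set" where
  "G_k k = {{u,v} | u v. u \<le> k \<and> v \<le> k \<and> u \<noteq> v} - removed_edges k"

end

theory Submission
  imports Defs
begin

text \<open>A graph without \<open>P_3\<close> and \<open>K_3\<close> is a star forest, so \<open>m = ex(G, H)\<close> is the largest
  number of leaves of a star forest in \<open>G\<close>. The star at a vertex gives \<open>deg v \<le> m\<close>; the
  neighbourhood of \<open>v\<close> joined to a star forest among the vertices at distance at least two
  from \<open>v\<close> bounds ex of that remote part by \<open>m - deg v\<close>, and similarly each neighbour of \<open>v\<close> has
  at most \<open>m + 1 - deg v\<close> remote neighbours. Double counting edges around \<open>v\<close> and induction give
  \<open>2 e(G) \<le> m (m + 2) \<le> k\<^sup>2 - 1\<close>, which \<open>G_k\<close> attains up to parity.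

  Conversely a graph within one edge of this bound has exactly \<open>m + 2\<close> vertices. For an
  extremal graph this means \<open>k + 1\<close> vertices, each missing an edge, and counting the
  \<open>(k + 1) / 2\<close> resp. \<open>(k + 2) / 2\<close> missing edges shows that they form a perfect matching,
  resp. a matching together with a path with two edges.\<close>

lemma simple_graph_edge: "simple_graph G \<Longrightarrow> e \<in> G \<Longrightarrow> \<exists>a b. a \<noteq> b \<and> e = {a,b}"
  unfolding simple_graph_def by (meson card_2_iff)

lemma simple_graph_no_loop: "simple_graph G \<Longrightarrow> {x,y} \<in> G \<Longrightarrow> x \<noteq> y"
  unfolding simple_graph_def by fastforce

lemma simple_graph_finite: "simple_graph G \<Longrightarrow> finite G"
  unfolding simple_graph_def by auto

lemma simple_graph_finite_vertices: "simple_graph G \<Longrightarrow> finite (\<Union>G)"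
  unfolding simple_graph_def by (metis card_eq_0_iff finite_Union zero_neq_numeral)

lemma simple_graph_subset: "simple_graph G \<Longrightarrow> H \<subseteq> G \<Longrightarrow> simple_graph H"
  unfolding simple_graph_def by (auto intro: finite_subset)

lemma edge_at_vertexE:
  assumes "card e = 2" "a \<in> e"
  obtains y where "e = {a,y}" "y \<noteq> a"
proof -
  obtain u w where uw: "e = {u,w}" "u \<noteq> w" using assms(1) by (meson card_2_iff)
  then show ?thesis using that assms(2) by (auto simp: insert_commute)
qed

definition nbhd :: "nat set set \<Rightarrow> nat \<Rightarrow> nat set" where
  "nbhd G x = {y. {x,y} \<in> G}"

abbreviation degree :: "nat set set \<Rightarrow> nat \<Rightarrow> nat" where
  "degree G x \<equiv> card (nbhd G x)"

abbreviation induced :: "nat set set \<Rightarrow> nat set \<Rightarrow> nat set set" where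
  "induced G W \<equiv> {e\<in>G. e \<subseteq> W}"

abbreviation remote :: "nat set set \<Rightarrow> nat \<Rightarrow> nat set" where
  "remote G v \<equiv> \<Union>G - insert v (nbhd G v)"

lemma nbhd_subset_vertices: "nbhd G x \<subseteq> \<Union>G"
  unfolding nbhd_def by auto

lemma finite_nbhd: "simple_graph G \<Longrightarrow> finite (nbhd G x)"
  using simple_graph_finite_vertices nbhd_subset_vertices finite_subset by metis

lemma nbhd_sym: "y \<in> nbhd G x \<longleftrightarrow> x \<in> nbhd G y"
  unfolding nbhd_def by (simp add: insert_commute)

lemma nbhd_irrefl: "simple_graph G \<Longrightarrow> x \<notin> nbhd G x"
  unfolding nbhd_def using simple_graph_no_loop by blast

lemma nbhd_nonempty:
  assumes "simple_graph G" and "v \<in> \<Union>G"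
  shows "nbhd G v \<noteq> {}"
proof -
  from assms(2) obtain e where e: "e \<in> G" "v \<in> e" by auto
  then obtain a b where "a \<noteq> b" "e = {a,b}" using simple_graph_edge[OF assms(1)] by blast
  then show ?thesis using e unfolding nbhd_def by (auto simp: insert_commute)
qed

lemma max_degree_vertex:
  assumes sg: "simple_graph G" and ne: "G \<noteq> {}"
  obtains v where "v \<in> \<Union>G" "\<And>x. x \<in> \<Union>G \<Longrightarrow> degree G x \<le> degree G v"
proof -
  have fin: "finite (\<Union>G)" and "\<Union>G \<noteq> {}"
    using simple_graph_finite_vertices[OF sg] ne simple_graph_edge[OF sg] by blast+
  then have "Max (degree G ` \<Union>G) \<in> degree G ` \<Union>G" by (intro Max_in) auto
  then obtain v where v: "v \<in> \<Union>G" "degree G v = Max (degree G ` \<Union>G)" by (metis imageE)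
  show ?thesis
    by (rule that[OF v(1)]) (use fin v(2) in simp)
qed

lemma degree_eq_card_incident:
  assumes sg: "simple_graph G"
  shows "degree G x = card {e\<in>G. x \<in> e}"
proof -
  have "bij_betw (\<lambda>y. {x,y}) (nbhd G x) {e\<in>G. x \<in> e}"
  proof (rule bij_betwI')
    show "\<And>y z. y \<in> nbhd G x \<Longrightarrow> z \<in> nbhd G x \<Longrightarrow> ({x, y} = {x, z}) = (y = z)"
      by (metis doubleton_eq_iff)
    show "\<And>y. y \<in> nbhd G x \<Longrightarrow> {x, y} \<in> {e \<in> G. x \<in> e}" unfolding nbhd_def by auto
    show "\<exists>y\<in>nbhd G x. e = {x, y}" if "e \<in> {e \<in> G. x \<in> e}" for e
    proof -
      from that have e: "e \<in> G" "x \<in> e" by auto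
      then obtain a b where "a \<noteq> b" "e = {a,b}" using simple_graph_edge[OF sg] by blast
      then show ?thesis using e unfolding nbhd_def by (auto simp: insert_commute)
    qed
  qed
  then show ?thesis by (rule bij_betw_same_card)
qed

lemma sum_card_incident:
  assumes "finite A" "finite E"
  shows "(\<Sum>u\<in>A. card {e\<in>E. u \<in> e}) = (\<Sum>e\<in>E. card (e \<inter> A))"
proof -
  have "card {e\<in>E. u \<in> e} = (\<Sum>e\<in>E. if u \<in> e then 1 else 0)" for u
    using sum.inter_filter[OF assms(2), of "\<lambda>_. 1::nat" "\<lambda>e. u \<in> e"] by simp
  moreover have "card (e \<inter> A) = (\<Sum>u\<in>A. if u \<in> e then 1 else 0)" for e
  proof -
    have "e \<inter> A = {u\<in>A. u \<in> e}" by auto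
    then show ?thesis using sum.inter_filter[OF assms(1), of "\<lambda>_. 1::nat" "\<lambda>u. u \<in> e"] by simp
  qed
  ultimately show ?thesis by (simp only: sum.swap[of _ A])
qed

lemma handshake:
  assumes sg: "simple_graph G" and A: "finite A" "\<Union>G \<subseteq> A"
  shows "(\<Sum>x\<in>A. degree G x) = 2 * card G"
proof -
  have "(\<Sum>x\<in>A. degree G x) = (\<Sum>e\<in>G. card (e \<inter> A))"
    using degree_eq_card_incident[OF sg] sum_card_incident[OF A(1) simple_graph_finite[OF sg]] by simp
  also have "\<dots> = (\<Sum>e\<in>G. 2)"
  proof (rule sum.cong)
    fix e assume "e \<in> G"
    then have "e \<inter> A = e" "card e = 2" using A(2) sg unfolding simple_graph_def by auto
    then show "card (e \<inter> A) = 2" by simp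
  qed simp
  finally show ?thesis by simp
qed

lemma sum_card_nbhd_Int_swap:
  assumes "finite N" "finite W"
  shows "(\<Sum>w\<in>W. card (nbhd G w \<inter> N)) = (\<Sum>u\<in>N. card (nbhd G u \<inter> W))"
proof -
  have "card (nbhd G w \<inter> N) = (\<Sum>u\<in>N. if {w,u} \<in> G then 1 else 0)" for w
  proof -
    have "nbhd G w \<inter> N = {u\<in>N. {w,u} \<in> G}" unfolding nbhd_def by auto
    then show ?thesis using sum.inter_filter[OF assms(1), of "\<lambda>_. 1::nat" "\<lambda>u. {w,u} \<in> G"] by simp
  qed
  moreover have "card (nbhd G u \<inter> W) = (\<Sum>w\<in>W. if {w,u} \<in> G then 1 else 0)" for u
  proof -
    have "nbhd G u \<inter> W = {w\<in>W. {w,u} \<in> G}" unfolding nbhd_def by (auto simp: insert_commute)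
    then show ?thesis using sum.inter_filter[OF assms(2), of "\<lambda>_. 1::nat" "\<lambda>w. {w,u} \<in> G"] by simp
  qed
  ultimately show ?thesis by (simp only: sum.swap[of _ W])
qed

text \<open>The neighbours of a remote vertex lie in the neighbourhood of \<open>v\<close> or are remote.\<close>

lemma twice_card_edges_around_vertex:
  fixes v :: nat
  assumes sg: "simple_graph G"
  defines "N \<equiv> nbhd G v" and "W \<equiv> remote G v"
  shows "2 * card G = degree G v + (\<Sum>u\<in>N. degree G u) + (\<Sum>u\<in>N. card (nbhd G u \<inter> W))
                      + 2 * card (induced G W)"
proof -
  have fV: "finite (\<Union>G)" using simple_graph_finite_vertices[OF sg] .
  have NV: "N \<subseteq> \<Union>G" unfolding N_def using nbhd_subset_vertices .
  have fN: "finite N" and fW: "finite W" using NV fV finite_subset unfolding W_def by auto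
  have vN: "v \<notin> N" unfolding N_def using nbhd_irrefl[OF sg] .
  have NW: "N \<inter> W = {}" and vW: "v \<notin> W" unfolding W_def N_def by auto
  have "\<Union>G \<subseteq> insert v (N \<union> W)" unfolding W_def N_def by auto
  then have "2 * card G = (\<Sum>x\<in>insert v (N \<union> W). degree G x)"
    using handshake[OF sg] fN fW by simp
  also have "\<dots> = degree G v + (\<Sum>u\<in>N. degree G u) + (\<Sum>w\<in>W. degree G w)"
    using vN vW fN fW NW by (simp add: sum.union_disjoint N_def)
  finally have E1: "2 * card G = degree G v + (\<Sum>u\<in>N. degree G u) + (\<Sum>w\<in>W. degree G w)" .
  have "degree G w = card (nbhd G w \<inter> N) + degree (induced G W) w" if wW: "w \<in> W" for w
  proof -
    have "nbhd G w \<subseteq> N \<union> W"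
      using wW nbhd_sym[of _ G w] nbhd_subset_vertices[of G w] unfolding W_def N_def by auto
    then have "nbhd G w = (nbhd G w \<inter> N) \<union> (nbhd G w \<inter> W)" by auto
    moreover have "nbhd (induced G W) w = nbhd G w \<inter> W" using wW unfolding nbhd_def by auto
    moreover have "card ((nbhd G w \<inter> N) \<union> (nbhd G w \<inter> W))
                     = card (nbhd G w \<inter> N) + card (nbhd G w \<inter> W)"
      using NW fN fW by (intro card_Un_disjoint) auto
    ultimately show ?thesis by simp
  qed
  then have "(\<Sum>w\<in>W. degree G w) = (\<Sum>w\<in>W. card (nbhd G w \<inter> N)) + (\<Sum>w\<in>W. degree (induced G W) w)"
    by (simp add: sum.distrib)
  also have "(\<Sum>w\<in>W. degree (induced G W) w) = 2 * card (induced G W)"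
    by (rule handshake) (use fW simple_graph_subset[OF sg] in auto)
  finally show ?thesis using E1 sum_card_nbhd_Int_swap[OF fN fW, of G] by linarith
qed

subsection \<open>Star forests\<close>

text \<open>A star forest in \<open>G\<close>, given by its set of leaves \<open>X\<close> and the map \<open>p\<close> sending each leaf
  to its centre; its edges are the sets \<open>{x, p x}\<close>.\<close>

definition star_forest :: "nat set set \<Rightarrow> nat set \<Rightarrow> (nat \<Rightarrow> nat) \<Rightarrow> bool" where
  "star_forest G X p \<longleftrightarrow> finite X \<and> (\<forall>x\<in>X. {x, p x} \<in> G) \<and> (\<forall>x\<in>X. p x \<notin> X)"

lemma star_edge_cases:
  assumes "{a,b} \<in> (\<lambda>x. {x, p x}) ` X"
  shows "(a \<in> X \<and> b = p a) \<or> (b \<in> X \<and> a = p b)"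
  using assms by (metis (no_types, lifting) doubleton_eq_iff imageE)

lemma H_free_star_forest:
  assumes "star_forest G X p"
  shows "H_free ((\<lambda>x. {x, p x}) ` X)"
proof -
  have nX: "\<And>x. x \<in> X \<Longrightarrow> p x \<notin> X" using assms unfolding star_forest_def by auto
  note edge = star_edge_cases[of _ _ p X]
  have "\<not> has_P3 ((\<lambda>x. {x, p x}) ` X)"
    unfolding has_P3_def using edge nX by (metis distinct_length_2_or_more)
  moreover have "\<not> has_K3 ((\<lambda>x. {x, p x}) ` X)"
    unfolding has_K3_def using edge nX by (metis distinct_length_2_or_more)
  ultimately show ?thesis unfolding H_free_def by blast
qed

lemma card_star_forest_edges:
  assumes "star_forest G X p"
  shows "card ((\<lambda>x. {x, p x}) ` X) = card X"
proof -
  have "inj_on (\<lambda>x. {x, p x}) X"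
    using assms unfolding inj_on_def star_forest_def by (metis doubleton_eq_iff)
  then show ?thesis by (simp add: card_image)
qed

lemma finite_card_H_free_subgraphs: "finite G \<Longrightarrow> finite {card F | F. F \<subseteq> G \<and> H_free F}"
  by (rule finite_subset[of _ "card ` Pow G"]) auto

lemma H_free_empty: "H_free {}"
  unfolding H_free_def has_P3_def has_K3_def by auto

lemma card_le_ex_H: "finite G \<Longrightarrow> F \<subseteq> G \<Longrightarrow> H_free F \<Longrightarrow> card F \<le> ex_H G"
  unfolding ex_H_def by (rule Max_ge) (auto simp: finite_card_H_free_subgraphs)

lemma ex_H_attained: "finite G \<Longrightarrow> \<exists>F. F \<subseteq> G \<and> H_free F \<and> card F = ex_H G"
proof -
  assume "finite G"
  then have "ex_H G \<in> {card F | F. F \<subseteq> G \<and> H_free F}"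
    unfolding ex_H_def by (intro Max_in) (use finite_card_H_free_subgraphs H_free_empty in auto)
  then show ?thesis by auto
qed

lemma star_forest_card_le_ex_H:
  assumes "finite G" "star_forest G X p"
  shows "card X \<le> ex_H G"
proof -
  have "(\<lambda>x. {x, p x}) ` X \<subseteq> G" using assms(2) unfolding star_forest_def by auto
  from card_le_ex_H[OF assms(1) this H_free_star_forest[OF assms(2)]]
  show ?thesis using card_star_forest_edges[OF assms(2)] by simp
qed

lemma H_free_edge_leaf:
  assumes sg: "simple_graph F" and hf: "H_free F" and ab: "{a,b} \<in> F"
  shows "nbhd F a = {b} \<or> nbhd F b = {a}"
proof (rule ccontr)
  have "b \<in> nbhd F a" "a \<in> nbhd F b" using ab unfolding nbhd_def by (simp_all add: insert_commute)
  moreover assume "\<not> (nbhd F a = {b} \<or> nbhd F b = {a})"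
  ultimately have "\<exists>a'\<in>nbhd F a. a' \<noteq> b" "\<exists>b'\<in>nbhd F b. b' \<noteq> a" by auto
  then obtain a' b' where a': "{a,a'} \<in> F" "a' \<noteq> b" and b': "{b,b'} \<in> F" "b' \<noteq> a"
    unfolding nbhd_def by blast
  have "a \<noteq> b" "a \<noteq> a'" "b \<noteq> b'" using simple_graph_no_loop[OF sg] ab a' b' by auto
  show False
  proof (cases "a' = b'")
    case True
    then have "has_K3 F"
      unfolding has_K3_def using ab a' b' \<open>a \<noteq> b\<close> \<open>a \<noteq> a'\<close> by (metis distinct_length_2_or_more distinct_singleton)
    then show False using hf unfolding H_free_def by auto
  next
    case False
    have "{a',a} \<in> F" using a' by (simp add: insert_commute)
    moreover have "distinct [a',a,b,b']" using a' b' False \<open>a \<noteq> b\<close> \<open>a \<noteq> a'\<close> \<open>b \<noteq> b'\<close> by auto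
    ultimately have "has_P3 F" unfolding has_P3_def using ab b' by blast
    then show False using hf unfolding H_free_def by auto
  qed
qed

text \<open>The leaves are the ends of degree one, oriented towards the other end, by the smaller
  label if both ends have degree one.\<close>

lemma H_free_star_forest_exists:
  assumes sg: "simple_graph G" and FG: "F \<subseteq> G" and hf: "H_free F"
  shows "\<exists>X p. star_forest G X p \<and> card X = card F"
proof -
  define L where "L = {x. \<exists>y. nbhd F x = {y}}"
  define q where "q x = the_elem (nbhd F x)" for x
  define X where "X = {x \<in> L. q x \<notin> L \<or> x < q x}"
  have sgF: "simple_graph F" using sg FG simple_graph_subset by blast
  have qL: "nbhd F x = {q x}" if xL: "x \<in> L" for x
  proof -
    obtain y where "nbhd F x = {y}" using xL unfolding L_def by blast
    then show ?thesis unfolding q_def by simp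
  qed
  have qL_edge: "{x, q x} \<in> F" if "x \<in> L" for x
  proof -
    have "q x \<in> nbhd F x" using qL[OF that] by simp
    then show ?thesis unfolding nbhd_def by simp
  qed
  have qq: "q (q x) = x" if "x \<in> L" "q x \<in> L" for x
  proof -
    have "q x \<in> nbhd F x" using qL[OF that(1)] by simp
    then have "x \<in> nbhd F (q x)" using nbhd_sym by metis
    then show ?thesis using qL[OF that(2)] by simp
  qed
  have nX: "q x \<notin> X" if "x \<in> X" for x
    using that qq unfolding X_def by auto
  have "F = (\<lambda>x. {x, q x}) ` X"
  proof
    show "(\<lambda>x. {x, q x}) ` X \<subseteq> F" using qL_edge unfolding X_def by blast
  next
    show "F \<subseteq> (\<lambda>x. {x, q x}) ` X"
    proof
      fix e assume e: "e \<in> F"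
      then obtain a b where ab: "e = {a,b}" "a \<noteq> b" using simple_graph_edge[OF sgF] by blast
      have ab_F: "{a,b} \<in> F" "{b,a} \<in> F" using e ab(1) by (simp_all add: insert_commute)
      then have "b \<in> nbhd F a" "a \<in> nbhd F b" unfolding nbhd_def by simp_all
      then have qa: "a \<in> L \<Longrightarrow> q a = b" and qb: "b \<in> L \<Longrightarrow> q b = a" using qL by auto
      have "(a \<in> X \<and> q a = b) \<or> (b \<in> X \<and> q b = a)"
      proof (cases "a \<in> L \<and> (b \<notin> L \<or> a < b)")
        case True
        then show ?thesis using qa unfolding X_def by auto
      next
        case False
        then have "b \<in> L" using H_free_edge_leaf[OF sgF hf ab_F(1)] unfolding L_def by blast
        moreover have "a \<notin> L \<or> b < a" using False ab(2) by auto
        ultimately show ?thesis using qb unfolding X_def by auto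
      qed
      then show "e \<in> (\<lambda>x. {x, q x}) ` X"
      proof
        assume "a \<in> X \<and> q a = b"
        then show ?thesis using ab(1) by blast
      next
        assume b: "b \<in> X \<and> q b = a"
        then have "e = {b, q b}" using ab(1) by (simp add: insert_commute)
        then show ?thesis using b by blast
      qed
    qed
  qed
  moreover have "star_forest G X q"
  proof -
    have "X \<subseteq> \<Union>G" using qL_edge FG unfolding X_def by blast
    then have "finite X" using simple_graph_finite_vertices[OF sg] finite_subset by blast
    moreover have "\<forall>x\<in>X. {x, q x} \<in> G" using qL_edge FG unfolding X_def by blast
    ultimately show ?thesis unfolding star_forest_def using nX by blast
  qed
  ultimately show ?thesis using card_star_forest_edges by metis
qed

lemma ex_H_star_forest:
  assumes "simple_graph G"
  obtains X p where "star_forest G X p" "card X = ex_H G"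
  using ex_H_attained[OF simple_graph_finite[OF assms]] H_free_star_forest_exists[OF assms] by metis

subsection \<open>The bound \<open>2 e(G) \<le> m (m + 2)\<close> for \<open>m = ex(G, H)\<close>\<close>

lemma degree_le_ex_H:
  assumes sg: "simple_graph G"
  shows "degree G u \<le> ex_H G"
proof -
  have "\<forall>x\<in>nbhd G u. {x, u} \<in> G" unfolding nbhd_def by (simp add: insert_commute)
  then have "star_forest G (nbhd G u) (\<lambda>_. u)"
    unfolding star_forest_def using finite_nbhd[OF sg] nbhd_irrefl[OF sg] by blast
  then show ?thesis using star_forest_card_le_ex_H simple_graph_finite[OF sg] by blast
qed

lemma ex_H_remote_add_degree_le:
  fixes v :: nat
  assumes sg: "simple_graph G"
  shows "ex_H (induced G (remote G v)) + degree G v \<le> ex_H G"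
proof -
  let ?N = "nbhd G v" and ?W = "remote G v"
  have sgW: "simple_graph (induced G ?W)" by (rule simple_graph_subset[OF sg]) auto
  obtain X q where sf: "star_forest (induced G ?W) X q" and cX: "card X = ex_H (induced G ?W)"
    using ex_H_star_forest[OF sgW] by blast
  have X: "X \<subseteq> ?W" "\<And>x. x \<in> X \<Longrightarrow> q x \<in> ?W \<and> {x, q x} \<in> G \<and> q x \<notin> X" "finite X"
    using sf unfolding star_forest_def by auto
  have fN: "finite ?N" using finite_nbhd[OF sg] .
  define p where "p x = (if x \<in> ?N then v else q x)" for x
  have "star_forest G (X \<union> ?N) p"
    unfolding star_forest_def
  proof (intro conjI ballI)
    show "finite (X \<union> ?N)" using X(3) fN by simp
  next
    fix x assume x: "x \<in> X \<union> ?N"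
    show "{x, p x} \<in> G"
      using x X(2) unfolding p_def by (cases "x \<in> ?N") (auto simp: nbhd_def insert_commute)
    show "p x \<notin> X \<union> ?N"
      using x X nbhd_irrefl[OF sg] unfolding p_def by (cases "x \<in> ?N") auto
  qed
  then have "card (X \<union> ?N) \<le> ex_H G"
    using star_forest_card_le_ex_H simple_graph_finite[OF sg] by blast
  moreover have "card (X \<union> ?N) = card X + card ?N"
    using X(1,3) fN by (intro card_Un_disjoint) auto
  ultimately show ?thesis using cX by simp
qed

lemma remote_degree_add_degree_le:
  assumes sg: "simple_graph G" and uN: "u \<in> nbhd G v"
  shows "card (nbhd G u \<inter> remote G v) + degree G v \<le> ex_H G + 1"
proof -
  let ?N = "nbhd G v" and ?W = "remote G v"
  have fN: "finite ?N" using finite_nbhd[OF sg] .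
  define p where "p x = (if x \<in> ?N then v else u)" for x
  define X where "X = (?N - {u}) \<union> (nbhd G u \<inter> ?W)"
  have "star_forest G X p"
    unfolding star_forest_def
  proof (intro conjI ballI)
    show "finite X" unfolding X_def using fN finite_nbhd[OF sg] by simp
  next
    fix x assume x: "x \<in> X"
    show "{x, p x} \<in> G"
      using x unfolding p_def X_def by (cases "x \<in> ?N") (auto simp: nbhd_def insert_commute)
    show "p x \<notin> X"
      unfolding p_def X_def using uN nbhd_irrefl[OF sg] by auto
  qed
  then have "card X \<le> ex_H G" using star_forest_card_le_ex_H simple_graph_finite[OF sg] by blast
  moreover have "card X = card (?N - {u}) + card (nbhd G u \<inter> ?W)"
    unfolding X_def by (rule card_Un_disjoint) (use fN finite_nbhd[OF sg] in auto)
  moreover have "card (?N - {u}) + 1 = card ?N" using card_Suc_Diff1[OF fN uN] by simp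
  ultimately show ?thesis by linarith
qed

lemma twice_card_edges_le_around_vertex:
  fixes v :: nat
  assumes sg: "simple_graph G"
  shows "2 * card G \<le> degree G v + (\<Sum>u\<in>nbhd G v. degree G u)
                      + degree G v * (ex_H G + 1 - degree G v) + 2 * card (induced G (remote G v))"
proof -
  have "card (nbhd G u \<inter> remote G v) \<le> ex_H G + 1 - degree G v" if "u \<in> nbhd G v" for u
    using remote_degree_add_degree_le[OF sg that] by linarith
  then have "(\<Sum>u\<in>nbhd G v. card (nbhd G u \<inter> remote G v)) \<le> degree G v * (ex_H G + 1 - degree G v)"
    using sum_bounded_above[of "nbhd G v" _ "ex_H G + 1 - degree G v"] by simp
  then show ?thesis using twice_card_edges_around_vertex[OF sg, of v] by linarith
qed

lemma degree_budget_le: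
  fixes d m m' :: nat
  assumes "m' + d \<le> m"
  shows "d + d * d + d * (m + 1 - d) + m' * (m' + 2) + d * (m - d) \<le> m * (m + 2)"
proof -
  define t where "t = m - d"
  have t: "m = d + t" "m' \<le> t" using assms unfolding t_def by linarith+
  have "m' * (m' + 2) \<le> t * (t + 2)" using t(2) by (intro mult_le_mono) auto
  moreover have "m + 1 - d = t + 1" "m - d = t" using t by simp_all
  ultimately show ?thesis unfolding t(1) by (simp add: algebra_simps)
qed

theorem twice_card_le_ex_H:
  assumes "simple_graph G"
  shows "2 * card G \<le> ex_H G * (ex_H G + 2)"
  using assms
proof (induction "card G" arbitrary: G rule: less_induct)
  case less
  note sg = less.prems
  show ?case
  proof (cases "G = {}")
    case True then show ?thesis by simp
  next
    case False
    then obtain e where e: "e \<in> G" by blast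
    then obtain v y where vy: "v \<noteq> y" "e = {v,y}" using simple_graph_edge[OF sg] by blast
    define GW where "GW = induced G (remote G v)"
    let ?d = "degree G v" and ?m = "ex_H G"
    have "e \<notin> GW" unfolding GW_def using vy by auto
    then have "card GW < card G"
      unfolding GW_def using e simple_graph_finite[OF sg] by (intro psubset_card_mono) auto
    moreover have "simple_graph GW" unfolding GW_def by (rule simple_graph_subset[OF sg]) auto
    ultimately have IH: "2 * card GW \<le> ex_H GW * (ex_H GW + 2)" using less.hyps by blast
    have "(\<Sum>u\<in>nbhd G v. degree G u) \<le> ?d * ?m"
      using sum_bounded_above[of "nbhd G v" "degree G" ?m] degree_le_ex_H[OF sg] by simp
    moreover have "?d * ?m = ?d * ?d + ?d * (?m - ?d)"
      using degree_le_ex_H[OF sg, of v] by (simp add: diff_mult_distrib2)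
    ultimately have "2 * card G \<le> ?d + ?d * ?d + ?d * (?m + 1 - ?d) + ex_H GW * (ex_H GW + 2) + ?d * (?m - ?d)"
      using twice_card_edges_le_around_vertex[OF sg, of v] IH unfolding GW_def by linarith
    also have "\<dots> \<le> ?m * (?m + 2)"
      by (rule degree_budget_le) (use ex_H_remote_add_degree_le[OF sg, of v] GW_def in simp)
    finally show ?thesis .
  qed
qed

lemma card_vertices_le_dominating:
  assumes sg: "simple_graph G" and R: "R \<subseteq> \<Union>G"
    and dom: "\<And>x. x \<in> \<Union>G - R \<Longrightarrow> \<exists>y\<in>R. {x,y} \<in> G"
  shows "card (\<Union>G) \<le> card R + ex_H G"
proof -
  define p where "p x = (SOME y. y \<in> R \<and> {x,y} \<in> G)" for x
  have "p x \<in> R \<and> {x, p x} \<in> G" if "x \<in> \<Union>G - R" for x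
    unfolding p_def using someI_ex[of "\<lambda>y. y \<in> R \<and> {x,y} \<in> G"] dom[OF that] by blast
  then have "star_forest G (\<Union>G - R) p"
    unfolding star_forest_def using simple_graph_finite_vertices[OF sg] by auto
  then have "card (\<Union>G - R) \<le> ex_H G"
    using star_forest_card_le_ex_H simple_graph_finite[OF sg] by blast
  moreover have "card (\<Union>G - R) = card (\<Union>G) - card R"
    using R simple_graph_finite_vertices[OF sg] by (meson card_Diff_subset finite_subset)
  moreover have "card R \<le> card (\<Union>G)"
    using R simple_graph_finite_vertices[OF sg] by (rule card_mono[rotated])
  ultimately show ?thesis by linarith
qed

subsection \<open>Graphs attaining the bound up to one edge\<close>

text \<open>Around a vertex \<open>v\<close> of maximum degree every estimate behind \<open>2 e(G) \<le> m (m + 2)\<close> must be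
  tight up to the one unit of room: the neighbourhood \<open>N\<close> of \<open>v\<close> has \<open>m\<close> vertices, there are no
  edges among the remote vertices \<open>W\<close>, and the slack of the degree bound summed over \<open>N\<close> is at
  most one. With two remote vertices, distinct neighbours of them in \<open>N\<close> would dominate \<open>G\<close>,
  yielding a star forest with more than \<open>m\<close> leaves; so there is exactly one.\<close>

locale nearly_extremal =
  fixes G :: "nat set set" and v :: nat
  assumes simple: "simple_graph G"
    and two_le_ex_H: "2 \<le> ex_H G"
    and nearly_extremal: "ex_H G * (ex_H G + 2) \<le> 2 * card G + 1"
    and v_vertex: "v \<in> \<Union>G"
    and degree_v_max: "\<And>x. x \<in> \<Union>G \<Longrightarrow> degree G x \<le> degree G v"
begin

abbreviation "m \<equiv> ex_H G"
abbreviation "N \<equiv> nbhd G v"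
abbreviation "W \<equiv> remote G v"

lemma finite_N: "finite N"
  using finite_nbhd[OF simple] .

lemma finite_W: "finite W"
  using simple_graph_finite_vertices[OF simple] by simp

lemma v_notin_N: "v \<notin> N"
  using nbhd_irrefl[OF simple] .

lemma vertices_eq: "\<Union>G = insert v (N \<union> W)"
  using v_vertex nbhd_subset_vertices by auto

lemma card_vertices_eq: "card (\<Union>G) = 1 + degree G v + card W"
proof -
  have "card (insert v (N \<union> W)) = 1 + card (N \<union> W)"
    using v_notin_N finite_N finite_W by simp
  also have "card (N \<union> W) = card N + card W"
    using finite_N finite_W by (intro card_Un_disjoint) auto
  finally show ?thesis using vertices_eq by simp
qed

lemma degree_v_eq: "degree G v = m"
proof -
  let ?d = "degree G v" and ?mW = "ex_H (induced G W)"
  have L1: "?mW + ?d \<le> m" by (rule ex_H_remote_add_degree_le[OF simple])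
  have "(\<Sum>u\<in>N. degree G u) \<le> ?d * ?d"
    using sum_bounded_above[of N "degree G" ?d] degree_v_max nbhd_subset_vertices by fastforce
  moreover have "2 * card (induced G W) \<le> ?mW * (?mW + 2)"
    by (rule twice_card_le_ex_H, rule simple_graph_subset[OF simple]) auto
  ultimately have A: "2 * card G + ?d * (m - ?d) \<le> m * (m + 2)"
    using twice_card_edges_le_around_vertex[OF simple, of v] degree_budget_le[OF L1] by linarith
  have d1: "1 \<le> ?d"
    using nbhd_nonempty[OF simple v_vertex] finite_N by (simp add: Suc_le_eq card_gt_0_iff)
  show ?thesis
  proof (rule ccontr)
    assume "?d \<noteq> m"
    then have "1 \<le> m - ?d" using L1 by simp
    moreover have le1: "?d * (m - ?d) \<le> 1" using A nearly_extremal by linarith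
    moreover have "?d * 1 \<le> ?d * (m - ?d)" using \<open>1 \<le> m - ?d\<close> by (rule mult_le_mono2)
    ultimately have "?d = 1" using d1 by linarith
    then have "m = 2" using le1 \<open>1 \<le> m - ?d\<close> by simp
    then have "2 * card G + 1 \<le> 8" "8 \<le> 2 * card G + 1"
      using A nearly_extremal \<open>?d = 1\<close> by simp_all
    then show False by presburger
  qed
qed

lemma no_remote_edges: "induced G W = {}"
proof -
  have "ex_H (induced G W) = 0" using ex_H_remote_add_degree_le[OF simple, of v] degree_v_eq by simp
  moreover have "simple_graph (induced G W)" by (rule simple_graph_subset[OF simple]) auto
  ultimately have "card (induced G W) = 0" using twice_card_le_ex_H by fastforce
  then show ?thesis using simple_graph_finite[OF simple] by simp
qed

definition W_degree :: "nat \<Rightarrow> nat" where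
  "W_degree u = card (nbhd G u \<inter> W)"

definition slack :: "nat \<Rightarrow> nat" where
  "slack u = m + 1 - degree G u - W_degree u"

lemma W_degree_le_1: "u \<in> N \<Longrightarrow> W_degree u \<le> 1"
  using remote_degree_add_degree_le[OF simple] degree_v_eq unfolding W_degree_def by fastforce

lemma degree_N_vertex:
  assumes uN: "u \<in> N"
  shows "degree G u = 1 + card (nbhd G u \<inter> N) + W_degree u"
proof -
  define X where "X = (nbhd G u \<inter> N) \<union> (nbhd G u \<inter> W)"
  have "v \<in> nbhd G u" using uN nbhd_sym by metis
  then have "nbhd G u = insert v X"
    unfolding X_def using vertices_eq nbhd_subset_vertices[of G u] by auto
  moreover have "v \<notin> X" "finite X" unfolding X_def using v_notin_N finite_N finite_W by auto
  ultimately have "degree G u = Suc (card X)" by simp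
  moreover have "card X = card (nbhd G u \<inter> N) + W_degree u"
    unfolding X_def W_degree_def using finite_N finite_W by (intro card_Un_disjoint) auto
  ultimately show ?thesis by simp
qed

lemma card_N_non_nbhd:
  assumes uN: "u \<in> N"
  shows "card (N - {u} - nbhd G u) + 1 = slack u + 2 * W_degree u"
proof -
  have sub: "nbhd G u \<inter> N \<subseteq> N - {u}" using nbhd_irrefl[OF simple] by auto
  have "N - {u} - nbhd G u = (N - {u}) - (nbhd G u \<inter> N)" by auto
  then have "card (N - {u} - nbhd G u) = card (N - {u}) - card (nbhd G u \<inter> N)"
    using card_Diff_subset[OF _ sub] finite_N by simp
  moreover have "card (nbhd G u \<inter> N) \<le> card (N - {u})" using card_mono[OF _ sub] finite_N by simp
  moreover have "card (N - {u}) + 1 = m" using card_Suc_Diff1[OF finite_N uN] degree_v_eq by simp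
  moreover have "degree G u \<le> m" using degree_le_ex_H[OF simple] .
  ultimately show ?thesis
    using degree_N_vertex[OF uN] W_degree_le_1[OF uN] unfolding slack_def by linarith
qed

lemma sum_slack_le_1: "(\<Sum>u\<in>N. slack u) \<le> 1"
proof -
  have "degree G u + W_degree u + slack u = m + 1" if "u \<in> N" for u
    using degree_le_ex_H[OF simple, of u] W_degree_le_1[OF that] unfolding slack_def by simp
  then have "(\<Sum>u\<in>N. degree G u) + (\<Sum>u\<in>N. W_degree u) + (\<Sum>u\<in>N. slack u) = m * (m + 1)"
    using degree_v_eq by (simp add: sum.distrib[symmetric])
  moreover have "2 * card G = m + (\<Sum>u\<in>N. degree G u) + (\<Sum>u\<in>N. W_degree u)"
    using twice_card_edges_around_vertex[OF simple, of v] no_remote_edges degree_v_eq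
    unfolding W_degree_def by simp
  ultimately show ?thesis using nearly_extremal by (simp add: algebra_simps)
qed

lemma slack_le_1: "u \<in> N \<Longrightarrow> slack u \<le> 1"
  using member_le_sum[of u N slack] finite_N sum_slack_le_1 by simp

lemma slack_pos_unique:
  assumes "u1 \<in> N" "u2 \<in> N" "1 \<le> slack u1" "1 \<le> slack u2"
  shows "u1 = u2"
proof (rule ccontr)
  assume "u1 \<noteq> u2"
  then have "slack u1 + slack u2 = (\<Sum>u\<in>{u1,u2}. slack u)" by simp
  also have "\<dots> \<le> (\<Sum>u\<in>N. slack u)" using assms(1,2) finite_N by (intro sum_mono2) auto
  finally show False using sum_slack_le_1 assms(3,4) by linarith
qed

lemma W_nonempty: "W \<noteq> {}"
proof
  assume "W = {}"
  then have "W_degree u = 0" for u by (simp only: W_degree_def Int_empty_right card.empty)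
  then have "1 \<le> slack u" if "u \<in> N" for u
    using card_N_non_nbhd[OF that] by simp
  moreover obtain u1 u2 where "u1 \<in> N" "u2 \<in> N" "u1 \<noteq> u2"
    using two_le_ex_H degree_v_eq by (metis card_le_Suc_iff numeral_2_eq_2 Suc_le_D insertCI)
  ultimately show False using slack_pos_unique by blast
qed

lemma remote_vertex_has_N_neighbour:
  assumes wW: "w \<in> W"
  shows "\<exists>u\<in>N. {w,u} \<in> G"
proof -
  obtain y where y: "y \<in> nbhd G w" using nbhd_nonempty[OF simple] wW by blast
  have "y \<noteq> v" using y wW nbhd_sym by blast
  moreover have "y \<notin> W"
    using y wW no_remote_edges unfolding nbhd_def by blast
  moreover have "y \<in> \<Union>G" using y nbhd_subset_vertices by blast
  ultimately show ?thesis using y unfolding nbhd_def by blast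
qed

text \<open>Each remote vertex picks a neighbour in \<open>N\<close>, preferring the (at most one) vertex of \<open>N\<close>
  with a remote neighbour and positive slack.\<close>

lemma N_representatives:
  obtains r where "inj_on r W" "\<And>w. w \<in> W \<Longrightarrow> r w \<in> N \<and> {w, r w} \<in> G"
    "{u\<in>N. W_degree u = 1 \<and> slack u = 1} \<subseteq> r ` W"
proof -
  define E where "E = {u\<in>N. W_degree u = 1 \<and> slack u = 1}"
  define r where "r w = (if \<exists>u\<in>E. {w,u} \<in> G then SOME u. u \<in> E \<and> {w,u} \<in> G
                         else SOME u. u \<in> N \<and> {w,u} \<in> G)" for w
  have rN: "r w \<in> N \<and> {w, r w} \<in> G" if "w \<in> W" for w
    using someI_ex[of "\<lambda>u. u \<in> E \<and> {w,u} \<in> G"] someI_ex[of "\<lambda>u. u \<in> N \<and> {w,u} \<in> G"]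
      remote_vertex_has_N_neighbour[OF that] unfolding r_def E_def by auto
  have "inj_on r W"
  proof (rule inj_onI)
    fix w1 w2 assume w: "w1 \<in> W" "w2 \<in> W" "r w1 = r w2"
    then have "w1 \<in> nbhd G (r w1)" "w2 \<in> nbhd G (r w1)"
      using rN[OF w(1)] rN[OF w(2)] unfolding nbhd_def by (simp_all add: insert_commute)
    then have "{w1, w2} \<subseteq> nbhd G (r w1) \<inter> W" using w by blast
    then have "card {w1, w2} \<le> W_degree (r w1)"
      unfolding W_degree_def using finite_W by (intro card_mono) auto
    moreover have "W_degree (r w1) \<le> 1" using W_degree_le_1 rN w(1) by blast
    ultimately show "w1 = w2" by (cases "w1 = w2") auto
  qed
  moreover have "E \<subseteq> r ` W"
  proof
    fix u assume uE: "u \<in> E"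
    then have "card (nbhd G u \<inter> W) = 1" unfolding E_def W_degree_def by simp
    then obtain w where "w \<in> nbhd G u \<inter> W" by (metis card_1_singletonE insertI1)
    then have w: "w \<in> W" "{w,u} \<in> G" unfolding nbhd_def by (simp_all add: insert_commute)
    then have "r w \<in> E"
      using someI_ex[of "\<lambda>u. u \<in> E \<and> {w,u} \<in> G"] uE unfolding r_def by auto
    then have "r w = u"
      using uE slack_pos_unique unfolding E_def by simp
    then show "u \<in> r ` W" using w by blast
  qed
  ultimately show ?thesis using that rN unfolding E_def by blast
qed

lemma representatives_dominate:
  assumes W2: "2 \<le> card W" and r: "\<And>w. w \<in> W \<Longrightarrow> r w \<in> N \<and> {w, r w} \<in> G"
    and E: "{u\<in>N. W_degree u = 1 \<and> slack u = 1} \<subseteq> r ` W"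
    and cR: "card (r ` W) = card W"
    and x: "x \<in> \<Union>G - r ` W"
  shows "\<exists>y\<in>r ` W. {x,y} \<in> G"
proof -
  have RN: "r ` W \<subseteq> N" using r by blast
  consider "x = v" | "x \<in> W" | "x \<in> N - r ` W" using x vertices_eq by auto
  then show ?thesis
  proof cases
    case 1
    obtain w where "w \<in> W" using W_nonempty by blast
    then show ?thesis using 1 r unfolding nbhd_def by blast
  next
    case 2
    then show ?thesis using r by blast
  next
    case 3
    then have xN: "x \<in> N" and RNx: "r ` W \<subseteq> N - {x}" using RN by auto
    show ?thesis
    proof (cases "W_degree x = 0")
      case True
      then have "card (N - {x} - nbhd G x) = 0" using card_N_non_nbhd[OF xN] slack_le_1[OF xN] by simp
      then have "N - {x} \<subseteq> nbhd G x" using finite_N by simp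
      moreover obtain y where "y \<in> r ` W" using W_nonempty by blast
      ultimately show ?thesis using RNx unfolding nbhd_def by blast
    next
      case False
      then have "W_degree x = 1" using W_degree_le_1[OF xN] by simp
      moreover have "slack x \<noteq> 1" using 3 E \<open>W_degree x = 1\<close> by blast
      ultimately have "slack x = 0" using slack_le_1[OF xN] by simp
      then have "card (N - {x} - nbhd G x) \<le> 1" using card_N_non_nbhd[OF xN] \<open>W_degree x = 1\<close> by simp
      then have "\<not> r ` W \<subseteq> N - {x} - nbhd G x"
        using cR W2 card_mono[of "N - {x} - nbhd G x" "r ` W"] finite_N by fastforce
      then show ?thesis using RNx unfolding nbhd_def by blast
    qed
  qed
qed

lemma card_W_le_1: "card W \<le> 1"
proof (rule ccontr)
  assume "\<not> card W \<le> 1"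
  then have W2: "2 \<le> card W" by simp
  obtain r where r: "inj_on r W" "\<And>w. w \<in> W \<Longrightarrow> r w \<in> N \<and> {w, r w} \<in> G"
    "{u\<in>N. W_degree u = 1 \<and> slack u = 1} \<subseteq> r ` W"
    using N_representatives by blast
  have cR: "card (r ` W) = card W" using card_image[OF r(1)] .
  have "card (\<Union>G) \<le> card (r ` W) + m"
  proof (rule card_vertices_le_dominating[OF simple])
    show "r ` W \<subseteq> \<Union>G" using r(2) nbhd_subset_vertices by blast
    show "\<exists>y\<in>r ` W. {x,y} \<in> G" if "x \<in> \<Union>G - r ` W" for x
      by (rule representatives_dominate[OF W2 r(2,3) cR that])
  qed
  then show False using cR card_vertices_eq degree_v_eq by simp
qed

lemma card_vertices: "card (\<Union>G) = m + 2"
proof -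
  have "card W = 1" using card_W_le_1 W_nonempty finite_W by (simp add: le_Suc_eq card_0_eq)
  then show ?thesis using card_vertices_eq degree_v_eq by simp
qed

end

lemma card_vertices_if_nearly_extremal:
  assumes sg: "simple_graph G" and "2 \<le> ex_H G" and "ex_H G * (ex_H G + 2) \<le> 2 * card G + 1"
  shows "card (\<Union>G) = ex_H G + 2"
proof -
  have "G \<noteq> {}" using assms(2,3) by (cases "ex_H G") auto
  then obtain v where "v \<in> \<Union>G" "\<And>x. x \<in> \<Union>G \<Longrightarrow> degree G x \<le> degree G v"
    using max_degree_vertex[OF sg] by blast
  then interpret nearly_extremal G v using assms by unfold_locales
  show ?thesis using card_vertices .
qed

subsection \<open>The graphs \<open>G_k\<close>\<close>

definition complete_graph :: "nat set \<Rightarrow> nat set set" where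
  "complete_graph V = {e. e \<subseteq> V \<and> card e = 2}"

definition canonical_matching :: "nat \<Rightarrow> nat set set" where
  "canonical_matching p = (\<lambda>i. {2*i, 2*i+1}) ` {..<p}"

lemma card_complete_graph: "finite V \<Longrightarrow> card (complete_graph V) = card V choose 2"
  unfolding complete_graph_def using n_subsets by blast

lemma finite_complete_graph: "finite V \<Longrightarrow> finite (complete_graph V)"
  unfolding complete_graph_def by (rule finite_subset[of _ "Pow V"]) auto

lemma simple_graph_subset_complete_graph: "simple_graph G \<Longrightarrow> G \<subseteq> complete_graph (\<Union>G)"
  unfolding simple_graph_def complete_graph_def by blast

lemma G_k_eq: "G_k k = complete_graph {0..k} - removed_edges k"
proof -
  have "{{u,v} | u v. u \<le> k \<and> v \<le> k \<and> u \<noteq> v} = complete_graph {0..k}"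
  proof (intro set_eqI iffI)
    fix e assume "e \<in> {{u,v} | u v. u \<le> k \<and> v \<le> k \<and> u \<noteq> v}"
    then show "e \<in> complete_graph {0..k}" unfolding complete_graph_def by auto
  next
    fix e assume "e \<in> complete_graph {0..k}"
    then have e: "e \<subseteq> {0..k}" "card e = 2" unfolding complete_graph_def by auto
    then obtain u v where "e = {u,v}" "u \<noteq> v" by (meson card_2_iff)
    then show "e \<in> {{u,v} | u v. u \<le> k \<and> v \<le> k \<and> u \<noteq> v}" using e(1) by auto
  qed
  then show ?thesis unfolding G_k_def by simp
qed

lemma card_canonical_matching: "card (canonical_matching p) = p"
proof -
  have "inj_on (\<lambda>i::nat. {2*i, 2*i+1}) {..<p}"
    unfolding inj_on_def by (auto simp: doubleton_eq_iff)
  then show ?thesis unfolding canonical_matching_def by (simp add: card_image)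
qed

lemma canonical_matching_Suc:
  "canonical_matching (Suc n) = insert {2*n, 2*n+1} (canonical_matching n)"
  unfolding canonical_matching_def by (simp add: lessThan_Suc)

lemma removed_edges_odd: "odd k \<Longrightarrow> removed_edges k = canonical_matching ((k+1) div 2)"
  unfolding removed_edges_def canonical_matching_def by auto

lemma removed_edges_even:
  "even k \<Longrightarrow> removed_edges k = canonical_matching ((k-2) div 2) \<union> {{k-2, k-1}, {k-1, k}}"
  unfolding removed_edges_def canonical_matching_def by auto

lemma canonical_matching_subset: "2 * p \<le> Suc n \<Longrightarrow> canonical_matching p \<subseteq> complete_graph {0..n}"
  unfolding canonical_matching_def complete_graph_def by auto

lemma removed_edges_subset:
  assumes "3 \<le> k" shows "removed_edges k \<subseteq> complete_graph {0..k}"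
proof (cases "odd k")
  case True
  then show ?thesis unfolding removed_edges_odd[OF True] by (intro canonical_matching_subset) auto
next
  case False
  then have "canonical_matching ((k-2) div 2) \<subseteq> complete_graph {0..k}"
    by (intro canonical_matching_subset) auto
  moreover have "{{k-2, k-1}, {k-1, k}} \<subseteq> complete_graph {0..k}"
    unfolding complete_graph_def using assms by auto
  ultimately show ?thesis using removed_edges_even[of k] False by auto
qed

lemma card_removed_edges:
  assumes k3: "3 \<le> k"
  shows "card (removed_edges k) = (if even k then (k+2) div 2 else (k+1) div 2)"
proof (cases "odd k")
  case True
  then show ?thesis unfolding removed_edges_odd[OF True] card_canonical_matching by simp
next
  case False
  define p where "p = (k-2) div 2"
  have p2: "2 * p = k - 2" unfolding p_def using False k3 by (auto elim!: evenE)
  have "k - 1 \<notin> e" if "e \<in> canonical_matching p" for e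
    using that p2 unfolding canonical_matching_def by auto
  then have disj: "canonical_matching p \<inter> {{k-2, k-1}, {k-1, k}} = {}" by auto
  have "card {{k-2, k-1}, {k-1, k::nat}} = 2" using k3 by (simp add: doubleton_eq_iff)
  moreover have "card (canonical_matching p \<union> {{k-2, k-1}, {k-1, k}})
                   = card (canonical_matching p) + card {{k-2, k-1}, {k-1, k::nat}}"
    using disj by (intro card_Un_disjoint) (auto simp: canonical_matching_def)
  ultimately have "card (removed_edges k) = p + 2"
    using removed_edges_even False card_canonical_matching unfolding p_def by simp
  then show ?thesis using False p2 k3 by simp
qed

lemma removed_edges_partner:
  assumes k: "3 \<le> k" and c: "c \<le> k"
  shows "\<exists>c'. c' \<noteq> c \<and> {c,c'} \<in> removed_edges k"
proof -
  define c' where "c' = (if even c then c+1 else c-1)"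
  have pair: "{c, c'} \<in> canonical_matching p" if "c div 2 < p" for p
  proof -
    have "{c, c'} = {2 * (c div 2), 2 * (c div 2) + 1}"
      unfolding c'_def by (cases "even c") (auto elim!: evenE oddE simp: insert_commute)
    then show ?thesis unfolding canonical_matching_def using that by blast
  qed
  have "c' \<noteq> c" unfolding c'_def using c by presburger
  show ?thesis
  proof (cases "odd k")
    case True
    have "c div 2 < (k+1) div 2" using True c by presburger
    then have "{c, c'} \<in> removed_edges k" unfolding removed_edges_odd[OF True] by (rule pair)
    then show ?thesis using \<open>c' \<noteq> c\<close> by blast
  next
    case False
    then have ek: "even k" by simp
    show ?thesis
    proof (cases "c < k - 2")
      case True
      have "c div 2 < (k-2) div 2" using True ek by presburger
      then have "{c, c'} \<in> removed_edges k" unfolding removed_edges_even[OF ek] using pair by blast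
      then show ?thesis using \<open>c' \<noteq> c\<close> by blast
    next
      case False
      then consider "c = k-2" | "c = k-1" | "c = k" using c by linarith
      then show ?thesis
      proof cases
        case 1
        then show ?thesis using removed_edges_even[OF ek] k by (intro exI[of _ "k-1"]) auto
      next
        case 2
        then show ?thesis using removed_edges_even[OF ek] k
          by (intro exI[of _ "k-2"]) (auto simp: insert_commute)
      next
        case 3
        then show ?thesis using removed_edges_even[OF ek] k
          by (intro exI[of _ "k-1"]) (auto simp: insert_commute)
      qed
    qed
  qed
qed

lemma simple_graph_G_k: "simple_graph (G_k k)"
  unfolding simple_graph_def G_k_eq using finite_complete_graph[of "{0..k}"]
  unfolding complete_graph_def by auto

lemma card_G_k:
  assumes "3 \<le> k"
  shows "card (G_k k) + card (removed_edges k) = Suc k choose 2"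
proof -
  have "card (G_k k) = card (complete_graph {0..k}) - card (removed_edges k)"
    unfolding G_k_eq using removed_edges_subset[OF assms]
    by (intro card_Diff_subset) (auto intro: finite_subset finite_complete_graph)
  moreover have "card (removed_edges k) \<le> card (complete_graph {0..k})"
    using removed_edges_subset[OF assms] by (intro card_mono finite_complete_graph) auto
  ultimately show ?thesis using card_complete_graph[of "{0..k}"] by simp
qed

lemma twice_card_removed_edges:
  assumes "3 \<le> k"
  shows "2 * card (removed_edges k) = (if even k then k + 2 else k + 1)"
  using card_removed_edges[OF assms] by (auto elim!: evenE oddE)

lemma twice_card_G_k:
  assumes "3 \<le> k"
  shows "2 * card (G_k k) + (if even k then 2 else 1) = k * k"
proof -
  have "2 * (Suc k choose 2) = k * k + k" by (simp add: choose_two)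
  then show ?thesis using card_G_k[OF assms] twice_card_removed_edges[OF assms] by auto
qed

text \<open>An \<open>H\<close>-free subgraph with \<open>k\<close> edges would be a star forest with \<open>k\<close> leaves on \<open>k + 1\<close>
  vertices, hence a single star, but every centre misses an edge.\<close>

lemma ex_H_G_k_less:
  assumes k: "3 \<le> k"
  shows "ex_H (G_k k) < k"
proof (rule ccontr)
  assume "\<not> ex_H (G_k k) < k"
  then have ge: "k \<le> ex_H (G_k k)" by simp
  obtain X p where sf: "star_forest (G_k k) X p" and cX: "card X = ex_H (G_k k)"
    using ex_H_star_forest[OF simple_graph_G_k] by blast
  have edges: "\<And>x. x \<in> X \<Longrightarrow> {x, p x} \<in> G_k k" and nX: "\<And>x. x \<in> X \<Longrightarrow> p x \<notin> X"
    and fX: "finite X"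
    using sf unfolding star_forest_def by auto
  have inK: "x \<le> k \<and> p x \<le> k \<and> x \<noteq> p x" if "x \<in> X" for x
  proof -
    have "{x, p x} \<subseteq> {0..k}" "card {x, p x} = 2"
      using edges[OF that] unfolding G_k_eq complete_graph_def by auto
    then show ?thesis by (cases "x = p x") auto
  qed
  have "card (X \<union> p ` X) \<le> k + 1" using inK card_mono[of "{0..k}" "X \<union> p ` X"] by fastforce
  moreover have "card (X \<union> p ` X) = card X + card (p ` X)"
    using fX nX by (intro card_Un_disjoint) auto
  moreover have "X \<noteq> {}" using cX ge k by auto
  then have "card (p ` X) \<noteq> 0" using fX by simp
  ultimately have "card (p ` X) = 1" using cX ge by linarith
  then obtain c where pc: "p ` X = {c}" using card_1_singletonE by blast
  then have ck: "c \<le> k" using inK \<open>X \<noteq> {}\<close> by fastforce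
  obtain c' where c': "c' \<noteq> c" "{c,c'} \<in> removed_edges k" using removed_edges_partner[OF k ck] by blast
  have c'k: "c' \<le> k" using c'(2) removed_edges_subset[OF k] unfolding complete_graph_def by auto
  have "X \<subseteq> {0..k} - {c, c'}"
  proof
    fix x assume x: "x \<in> X"
    have pxc: "p x = c" using pc x by blast
    then have "{c, x} \<notin> removed_edges k" using edges[OF x] unfolding G_k_eq by (simp add: insert_commute)
    then have "x \<noteq> c'" using c'(2) by auto
    then show "x \<in> {0..k} - {c, c'}" using inK[OF x] pxc by simp
  qed
  then have "card X \<le> card ({0..k} - {c, c'})" by (intro card_mono) auto
  also have "\<dots> = k - 1" using ck c'k c'(1) by (simp add: card_Diff_subset)
  finally show False using cX ge k by simp
qed

subsection \<open>Recognising \<open>G_k\<close> from its complement\<close>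

lemma complete_graph_image:
  assumes bij: "bij_betw f V W"
  shows "(\<lambda>e. f ` e) ` complete_graph V = complete_graph W"
proof
  have inj: "inj_on f V" and im: "f ` V = W" using bij unfolding bij_betw_def by auto
  show "(\<lambda>e. f ` e) ` complete_graph V \<subseteq> complete_graph W"
    unfolding complete_graph_def using im card_image[OF inj_on_subset[OF inj]] by auto
  show "complete_graph W \<subseteq> (\<lambda>e. f ` e) ` complete_graph V"
  proof
    fix e' assume "e' \<in> complete_graph W"
    then have e': "e' \<subseteq> W" "card e' = 2" unfolding complete_graph_def by auto
    define e where "e = {x\<in>V. f x \<in> e'}"
    have fe: "f ` e = e'" unfolding e_def using e'(1) im by auto
    have "e \<subseteq> V" unfolding e_def by auto
    moreover have "card e = 2" using fe e'(2) card_image[OF inj_on_subset[OF inj \<open>e \<subseteq> V\<close>]] by simp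
    ultimately show "e' \<in> (\<lambda>e. f ` e) ` complete_graph V" using fe unfolding complete_graph_def by blast
  qed
qed

lemma graph_iso_G_k_if_complement:
  assumes sg: "simple_graph G"
    and bij: "bij_betw f (\<Union>G) {0..k}"
    and compl: "(\<lambda>e. f ` e) ` (complete_graph (\<Union>G) - G) = removed_edges k"
  shows "graph_iso G (G_k k)"
proof -
  let ?K = "complete_graph (\<Union>G)"
  have GK: "G \<subseteq> ?K" using simple_graph_subset_complete_graph[OF sg] .
  have inj: "inj_on f (\<Union>G)" using bij by (rule bij_betw_imp_inj_on)
  have "inj_on (\<lambda>e. f ` e) ?K"
  proof (rule inj_onI)
    fix e1 e2 assume "e1 \<in> ?K" "e2 \<in> ?K" "f ` e1 = f ` e2"
    then show "e1 = e2" using inj_on_image_eq_iff[OF inj] unfolding complete_graph_def by blast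
  qed
  then have "(\<lambda>e. f ` e) ` (?K - (?K - G)) = (\<lambda>e. f ` e) ` ?K - (\<lambda>e. f ` e) ` (?K - G)"
    by (intro inj_on_image_set_diff) auto
  also have "?K - (?K - G) = G" using GK by blast
  finally have hG: "(\<lambda>e. f ` e) ` G = G_k k"
    unfolding G_k_eq complete_graph_image[OF bij] compl .
  have "\<Union>(G_k k) = f ` (\<Union>G)" unfolding hG[symmetric] by auto
  then have "bij_betw f (\<Union>G) (\<Union>(G_k k))" using bij unfolding bij_betw_def by simp
  then show ?thesis unfolding graph_iso_def using hG by blast
qed

lemma edges_delete_closed:
  assumes C: "\<forall>e\<in>C. e \<subseteq> V \<and> card e = 2" and D: "\<forall>e\<in>D. e \<subseteq> S"
    and closed: "\<And>e. e \<in> C \<Longrightarrow> e \<inter> S \<noteq> {} \<Longrightarrow> e \<in> D"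
  shows "\<forall>e\<in>C - D. e \<subseteq> V - S \<and> card e = 2"
    and "x \<notin> S \<Longrightarrow> nbhd (C - D) x = nbhd C x"
proof -
  show "\<forall>e\<in>C - D. e \<subseteq> V - S \<and> card e = 2" using C closed by blast
  show "nbhd (C - D) x = nbhd C x" if "x \<notin> S"
    using D that unfolding nbhd_def by blast
qed

lemma edge_in_nbhd:
  assumes "e \<in> C" "card e = 2" "a \<in> e"
  obtains y where "y \<in> nbhd C a" "e = {a,y}"
proof -
  obtain y where "e = {a,y}" using edge_at_vertexE[OF assms(2,3)] by blast
  then show ?thesis using that assms(1) unfolding nbhd_def by blast
qed

lemma bij_betw_extend_image_edges:
  assumes f: "bij_betw f V A" and g: "bij_betw g S B" and VS: "V \<inter> S = {}" and AB: "A \<inter> B = {}"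
    and CV: "\<forall>e\<in>C. e \<subseteq> V"
  defines "h \<equiv> \<lambda>x. if x \<in> S then g x else f x"
  shows "bij_betw h (V \<union> S) (A \<union> B)" and "(\<lambda>e. h ` e) ` C = (\<lambda>e. f ` e) ` C"
proof -
  have "\<And>x. x \<in> V \<Longrightarrow> h x = f x" "\<And>x. x \<in> S \<Longrightarrow> h x = g x" using VS unfolding h_def by auto
  then have "bij_betw h V A" "bij_betw h S B" using f g bij_betw_cong by metis+
  then show "bij_betw h (V \<union> S) (A \<union> B)" using VS AB by (intro bij_betw_combine) auto
  show "(\<lambda>e. h ` e) ` C = (\<lambda>e. f ` e) ` C"
    using CV VS unfolding h_def by (intro image_cong refl) (auto intro!: image_cong)
qed

lemma perfect_matching_iso_canonical:
  assumes "finite V" "card V = 2 * n" "\<forall>e\<in>C. e \<subseteq> V \<and> card e = 2" "\<forall>x\<in>V. degree C x = 1"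
  shows "\<exists>f. bij_betw f V {0..<2*n} \<and> (\<lambda>e. f ` e) ` C = canonical_matching n"
  using assms
proof (induction n arbitrary: V C)
  case 0
  then have "V = {}" "C = {}" by auto
  then show ?case unfolding canonical_matching_def by (auto simp: bij_betw_def)
next
  case (Suc n)
  note fV = Suc.prems(1) and CE = Suc.prems(3) and deg1 = Suc.prems(4)
  obtain a where aV: "a \<in> V" using Suc.prems(2) by fastforce
  obtain b where na: "nbhd C a = {b}" using deg1 aV card_1_singletonE by blast
  have abC: "{a,b} \<in> C" using na unfolding nbhd_def by auto
  have bV: "b \<in> V" and ab: "a \<noteq> b" using CE abC by fastforce+
  have "a \<in> nbhd C b" using na nbhd_sym by fastforce
  then have nb: "nbhd C b = {a}" using deg1 bV by (metis card_1_singletonE singletonD)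
  have closed: "e \<in> {{a,b}}" if eC: "e \<in> C" and meet: "e \<inter> {a,b} \<noteq> {}" for e
  proof -
    have "card e = 2" using CE eC by blast
    obtain x where x: "x \<in> e" "x \<in> {a,b}" using meet by blast
    then obtain y where "y \<in> nbhd C x" "e = {x,y}" using edge_in_nbhd[OF eC \<open>card e = 2\<close>] by blast
    then show ?thesis using x(2) na nb by (auto simp: insert_commute)
  qed
  have "\<forall>e\<in>{{a,b}}. e \<subseteq> {a,b}" by simp
  note del = edges_delete_closed[OF CE this closed]
  have "card (V - {a,b}) = 2 * n" using Suc.prems(2) aV bV ab fV by (simp add: card_Diff_subset)
  moreover have "\<forall>x\<in>V - {a,b}. degree (C - {{a,b}}) x = 1" using deg1 del(2) by auto
  ultimately obtain f where f: "bij_betw f (V - {a,b}) {0..<2*n}"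
      "(\<lambda>e. f ` e) ` (C - {{a,b}}) = canonical_matching n"
    using Suc.IH[of "V - {a,b}" "C - {{a,b}}"] fV del(1) by auto
  define g where "g x = (if x = a then 2*n else 2*n+1)" for x
  have "bij_betw g {a,b} {2*n, 2*n+1}" unfolding bij_betw_def g_def using ab by auto
  have CV: "\<forall>e\<in>C - {{a,b}}. e \<subseteq> V - {a,b}" using del(1) by blast
  let ?h = "\<lambda>x. if x \<in> {a,b} then g x else f x"
  have "(V - {a,b}) \<inter> {a,b} = {}" "{0..<2*n} \<inter> {2*n, 2*n+1} = {}" by auto
  note ext = bij_betw_extend_image_edges[OF f(1) \<open>bij_betw g _ _\<close> this CV]
  have "(V - {a,b}) \<union> {a,b} = V" "{0..<2*n} \<union> {2*n, 2*n+1} = {0..<2 * Suc n}" using aV bV by auto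
  then have "bij_betw ?h V {0..<2 * Suc n}" using ext(1) by simp
  moreover have "(\<lambda>e. ?h ` e) ` C = canonical_matching (Suc n)"
  proof -
    have "C = insert {a,b} (C - {{a,b}})" using abC by auto
    then have "(\<lambda>e. ?h ` e) ` C = insert (?h ` {a,b}) ((\<lambda>e. ?h ` e) ` (C - {{a,b}}))"
      by (metis image_insert)
    moreover have "?h ` {a,b} = {2*n, 2*n+1}" unfolding g_def using ab by auto
    ultimately show ?thesis using ext(2) f(2) canonical_matching_Suc by simp
  qed
  ultimately show ?case by blast
qed

lemma matching_iso_removed_edges_odd:
  assumes k: "odd k" and V: "finite V" "card V = k + 1"
    and C: "\<forall>e\<in>C. e \<subseteq> V \<and> card e = 2" and deg1: "\<forall>x\<in>V. degree C x = 1"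
  shows "\<exists>f. bij_betw f V {0..k} \<and> (\<lambda>e. f ` e) ` C = removed_edges k"
proof -
  define n where "n = (k+1) div 2"
  have "card V = 2 * n" "{0..<2 * n} = {0..k}" unfolding n_def using k V(2) by (auto elim!: oddE)
  moreover have "removed_edges k = canonical_matching n" unfolding n_def using removed_edges_odd[OF k] .
  ultimately show ?thesis using perfect_matching_iso_canonical[OF V(1) _ C deg1] by simp
qed

lemma matching_path_iso_removed_edges_even:
  assumes k: "even k" "3 \<le> k" and V: "finite V" "card V = k + 1"
    and C: "\<forall>e\<in>C. e \<subseteq> V \<and> card e = 2"
    and c: "c \<in> V" "degree C c = 2" and deg1: "\<forall>x\<in>V - {c}. degree C x = 1"
  shows "\<exists>f. bij_betw f V {0..k} \<and> (\<lambda>e. f ` e) ` C = removed_edges k"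
proof -
  obtain a b where nc: "nbhd C c = {a,b}" "a \<noteq> b" using c(2) by (meson card_2_iff)
  have acC: "{c,a} \<in> C" "{c,b} \<in> C" using nc unfolding nbhd_def by auto
  then have aV: "a \<in> V" and bV: "b \<in> V" and ca: "c \<noteq> a" "c \<noteq> b" using C by fastforce+
  have "c \<in> nbhd C a" "c \<in> nbhd C b" using acC unfolding nbhd_def by (simp_all add: insert_commute)
  moreover have "degree C a = 1" "degree C b = 1" using deg1 aV bV ca by auto
  ultimately have na: "nbhd C a = {c}" and nb: "nbhd C b = {c}"
    by (metis card_1_singletonE singletonD)+
  let ?S = "{a,b,c}" and ?D = "{{a,c},{c,b}}"
  have closed: "e \<in> ?D" if eC: "e \<in> C" and meet: "e \<inter> ?S \<noteq> {}" for e
  proof -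
    have "card e = 2" using C eC by blast
    obtain x where x: "x \<in> e" "x \<in> ?S" using meet by blast
    then obtain y where "y \<in> nbhd C x" "e = {x,y}" using edge_in_nbhd[OF eC \<open>card e = 2\<close>] by blast
    then show ?thesis using x(2) na nb nc by (auto simp: insert_commute)
  qed
  have "\<forall>e\<in>?D. e \<subseteq> ?S" by auto
  note del = edges_delete_closed[OF C this closed]
  define n where "n = (k-2) div 2"
  have n2: "2 * n = k - 2" unfolding n_def using k by (auto elim!: evenE)
  have "card (V - ?S) = 2 * n" using V aV bV c(1) nc(2) ca n2 by (simp add: card_Diff_subset)
  moreover have "\<forall>x\<in>V - ?S. degree (C - ?D) x = 1" using deg1 del(2) by auto
  ultimately obtain f where f: "bij_betw f (V - ?S) {0..<2*n}"
      "(\<lambda>e. f ` e) ` (C - ?D) = canonical_matching n"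
    using perfect_matching_iso_canonical[of "V - ?S" n "C - ?D"] V(1) del(1) by auto
  define g where "g x = (if x = a then k-2 else if x = c then k-1 else k)" for x
  have "bij_betw g ?S {k-2, k-1, k}" unfolding bij_betw_def g_def using nc(2) ca k by auto
  have CV: "\<forall>e\<in>C - ?D. e \<subseteq> V - ?S" using del(1) by blast
  let ?h = "\<lambda>x. if x \<in> ?S then g x else f x"
  have "(V - ?S) \<inter> ?S = {}" "{0..<2*n} \<inter> {k-2, k-1, k} = {}" using n2 by auto
  note ext = bij_betw_extend_image_edges[OF f(1) \<open>bij_betw g _ _\<close> this CV]
  have "(V - ?S) \<union> ?S = V" "{0..<2*n} \<union> {k-2, k-1, k} = {0..k}" using aV bV c(1) n2 k by auto
  then have "bij_betw ?h V {0..k}" using ext(1) by simp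
  moreover have "(\<lambda>e. ?h ` e) ` C = removed_edges k"
  proof -
    have "(C - ?D) \<union> ?D = C" using acC by (auto simp: insert_commute)
    then have "(\<lambda>e. ?h ` e) ` C = (\<lambda>e. ?h ` e) ` (C - ?D) \<union> {?h ` {a,c}, ?h ` {c,b}}"
      using image_Un[of "\<lambda>e. ?h ` e" "C - ?D" ?D] by simp
    moreover have "?h ` {a,c} = {k-2, k-1}" "?h ` {c,b} = {k-1, k}"
      unfolding g_def using nc(2) ca k by auto
    ultimately show ?thesis using ext(2) f(2) removed_edges_even[OF k(1)] unfolding n_def by simp
  qed
  ultimately show ?thesis by blast
qed

lemma card_le_card_G_k:
  assumes k: "3 \<le> k" and sg: "simple_graph G" and ex: "ex_H G < k"
  shows "card G \<le> card (G_k k)"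
proof -
  let ?m = "ex_H G"
  have "(?m + 1) * (?m + 1) \<le> k * k" using ex by (intro mult_le_mono) auto
  moreover have "(?m + 1) * (?m + 1) = ?m * (?m + 2) + 1" by (simp add: algebra_simps)
  ultimately have "2 * card G + 1 \<le> k * k" using twice_card_le_ex_H[OF sg] by linarith
  moreover have "even k \<Longrightarrow> even (k * k)" by simp
  ultimately have "2 * card G + (if even k then 2 else 1) \<le> k * k" by (cases "even k") presburger+
  then show ?thesis using twice_card_G_k[OF k] by linarith
qed

lemma E_H_eq:
  assumes k: "3 \<le> k"
  shows "E_H k = enat (card (G_k k))"
  unfolding E_H_def
proof (rule Sup_eqI)
  fix y assume "y \<in> {enat (card G) |G. simple_graph G \<and> ex_H G < k}"
  then show "y \<le> enat (card (G_k k))" using card_le_card_G_k[OF k] by auto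
next
  fix y assume "\<And>z. z \<in> {enat (card G) |G. simple_graph G \<and> ex_H G < k} \<Longrightarrow> z \<le> y"
  then show "enat (card (G_k k)) \<le> y" using simple_graph_G_k ex_H_G_k_less[OF k] by blast
qed

lemma extremal_ex_H_card_vertices:
  assumes k: "3 \<le> k" and sg: "simple_graph G" and ex: "ex_H G < k" and cG: "card G = card (G_k k)"
  shows "ex_H G = k - 1" and "card (\<Union>G) = k + 1"
proof -
  let ?m = "ex_H G"
  have eq: "(?m + 1) * (?m + 1) = ?m * (?m + 2) + 1" by (simp add: algebra_simps)
  have G2: "k * k \<le> 2 * card G + 2" using twice_card_G_k[OF k] cG by (simp split: if_splits)
  show m: "?m = k - 1"
  proof (rule ccontr)
    assume "?m \<noteq> k - 1"
    then have "(?m + 1) * (?m + 1) \<le> (k - 1) * (k - 1)" using ex by (intro mult_le_mono) auto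
    moreover have "(k - 1) * (k - 1) + 2 * k = k * k + 1" using k by (cases k) (auto simp: algebra_simps)
    ultimately show False using twice_card_le_ex_H[OF sg] eq G2 k by linarith
  qed
  have "?m + 1 = k" using m k by simp
  then have "?m * (?m + 2) + 1 = k * k" using eq by simp
  then have "?m * (?m + 2) \<le> 2 * card G + 1" using G2 by linarith
  moreover have "2 \<le> ?m" using m k by simp
  ultimately show "card (\<Union>G) = k + 1" using card_vertices_if_nearly_extremal[OF sg] m k by simp
qed

lemma degree_complement:
  assumes sg: "simple_graph G" and x: "x \<in> \<Union>G"
  shows "degree (complete_graph (\<Union>G) - G) x + degree G x + 1 = card (\<Union>G)"
proof -
  let ?V = "\<Union>G"
  have "nbhd (complete_graph ?V - G) x = ?V - {x} - nbhd G x"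
    using x unfolding nbhd_def complete_graph_def by (auto simp: card_insert_if)
  moreover have "nbhd G x \<subseteq> ?V - {x}" using nbhd_subset_vertices nbhd_irrefl[OF sg] by blast
  moreover have fV: "finite ?V" using simple_graph_finite_vertices[OF sg] .
  ultimately have "degree (complete_graph ?V - G) x = card (?V - {x}) - degree G x"
    and "degree G x \<le> card (?V - {x})"
    by (simp_all add: card_Diff_subset card_mono finite_subset)
  moreover have "card (?V - {x}) + 1 = card ?V" using card_Suc_Diff1[OF fV x] by simp
  ultimately show ?thesis by linarith
qed

lemma all_eq_1_if_sum_le_card:
  fixes f :: "'a \<Rightarrow> nat"
  assumes "finite A" "\<forall>x\<in>A. 1 \<le> f x" "sum f A \<le> card A"
  shows "\<forall>x\<in>A. f x = 1"
proof (rule ccontr)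
  assume "\<not> (\<forall>x\<in>A. f x = 1)"
  then have "\<exists>a\<in>A. 1 < f a" using assms(2) by force
  then have "(\<Sum>x\<in>A. 1) < sum f A" using assms(1,2) by (intro sum_strict_mono_ex1) auto
  then show False using assms(3) by simp
qed

lemma unique_2_if_sum_eq_Suc_card:
  fixes f :: "'a \<Rightarrow> nat"
  assumes A: "finite A" and pos: "\<forall>x\<in>A. 1 \<le> f x" and sum: "sum f A = card A + 1"
  obtains c where "c \<in> A" "f c = 2" "\<forall>x\<in>A - {c}. f x = 1"
proof -
  have "\<not> (\<forall>x\<in>A. f x = 1)"
  proof
    assume "\<forall>x\<in>A. f x = 1"
    then have "sum f A = (\<Sum>x\<in>A. 1)" by (intro sum.cong) auto
    then show False using sum by simp
  qed
  then obtain c where c: "c \<in> A" "f c \<noteq> 1" by blast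
  with pos have "2 \<le> f c" by fastforce
  have split: "sum f A = f c + sum f (A - {c})" using c(1) A by (simp add: sum.remove)
  have "card (A - {c}) \<le> sum f (A - {c})" using pos sum_mono[of "A - {c}" "\<lambda>_. 1" f] by simp
  moreover have "card (A - {c}) + 1 = card A" using card_Suc_Diff1[OF A c(1)] by simp
  ultimately have "f c = 2" and "sum f (A - {c}) \<le> card (A - {c})" using split sum \<open>2 \<le> f c\<close> by linarith+
  moreover have "\<forall>x\<in>A - {c}. f x = 1"
    using A pos \<open>sum f (A - {c}) \<le> card (A - {c})\<close> by (intro all_eq_1_if_sum_le_card) auto
  ultimately show ?thesis using that c(1) by blast
qed

lemma graph_iso_G_k_if_extremal:
  assumes k: "3 \<le> k" and sg: "simple_graph G" and ex: "ex_H G < k" and cG: "card G = card (G_k k)"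
  shows "graph_iso G (G_k k)"
proof -
  let ?V = "\<Union>G"
  define C where "C = complete_graph ?V - G"
  have fV: "finite ?V" using simple_graph_finite_vertices[OF sg] .
  have cV: "card ?V = k + 1" and m: "ex_H G = k - 1"
    using extremal_ex_H_card_vertices[OF assms] by simp_all
  have CK: "C \<subseteq> complete_graph ?V" unfolding C_def by blast
  then have CE: "\<forall>e\<in>C. e \<subseteq> ?V \<and> card e = 2" unfolding complete_graph_def by blast
  have fC: "finite C" using finite_subset[OF CK finite_complete_graph[OF fV]] .
  then have sgC: "simple_graph C" unfolding simple_graph_def using CE by blast
  have pos: "\<forall>x\<in>?V. 1 \<le> degree C x"
  proof
    fix x assume "x \<in> ?V"
    then have "degree C x + degree G x + 1 = k + 1" using degree_complement[OF sg] cV unfolding C_def by simp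
    moreover have "degree G x \<le> k - 1" using degree_le_ex_H[OF sg] m by simp
    ultimately show "1 \<le> degree C x" using k by linarith
  qed
  have GK: "G \<subseteq> complete_graph ?V" using simple_graph_subset_complete_graph[OF sg] .
  have "card C = card (complete_graph ?V) - card G"
    unfolding C_def using GK finite_subset[OF GK finite_complete_graph[OF fV]] by (rule card_Diff_subset[rotated])
  moreover have "card G \<le> card (complete_graph ?V)" using GK finite_complete_graph[OF fV] by (rule card_mono[rotated])
  ultimately have "card C = card (removed_edges k)"
    using card_complete_graph[OF fV] card_G_k[OF k] cG cV by simp
  moreover have "\<Union>C \<subseteq> ?V" using CE by blast
  ultimately have sumC: "(\<Sum>x\<in>?V. degree C x) = card ?V + (if even k then 1 else 0)"
    using handshake[OF sgC fV] twice_card_removed_edges[OF k] cV by simp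
  show ?thesis
  proof (cases "even k")
    case False
    then have "\<forall>x\<in>?V. degree C x = 1" using all_eq_1_if_sum_le_card[OF fV pos] sumC by simp
    then obtain f where "bij_betw f ?V {0..k}" "(\<lambda>e. f ` e) ` C = removed_edges k"
      using matching_iso_removed_edges_odd[OF False fV cV CE] by blast
    then show ?thesis using graph_iso_G_k_if_complement[OF sg] unfolding C_def by blast
  next
    case True
    then obtain c where "c \<in> ?V" "degree C c = 2" "\<forall>x\<in>?V - {c}. degree C x = 1"
      using unique_2_if_sum_eq_Suc_card[OF fV pos] sumC by auto
    then obtain f where "bij_betw f ?V {0..k}" "(\<lambda>e. f ` e) ` C = removed_edges k"
      using matching_path_iso_removed_edges_even[OF True k fV cV CE] by blast
    then show ?thesis using graph_iso_G_k_if_complement[OF sg] unfolding C_def by blast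
  qed
qed

theorem theorem3p16:
  fixes k :: nat
  assumes "k \<ge> 3"
  shows "E_H k = enat (if even k then (Suc k choose 2) - (k+2) div 2
                                  else (Suc k choose 2) - (k+1) div 2)
         \<and> simple_graph (G_k k) \<and> ex_H (G_k k) < k
         \<and> enat (card (G_k k)) = E_H k
         \<and> (\<forall>G. simple_graph G \<and> ex_H G < k \<and> enat (card G) = E_H k
                \<longrightarrow> graph_iso G (G_k k))"
proof -
  have "card (G_k k) = (if even k then (Suc k choose 2) - (k+2) div 2 else (Suc k choose 2) - (k+1) div 2)"
    using card_G_k[OF assms] card_removed_edges[OF assms] by (simp split: if_splits)
  then show ?thesis
    using E_H_eq[OF assms] simple_graph_G_k ex_H_G_k_less[OF assms] graph_iso_G_k_if_extremal[OF assms]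
    by simp
qed

end
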